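(* Let $l,m\ge0$ be integers with $l+m\ge1$. There exist real constants $\tilde\alpha_{l,m},\tilde\beta_{l,m},\tilde\gamma_{l,m},\tilde\delta_{l,m}$ and, for each index $k$ below, real polynomials in $h$ of the indicated degrees (depending only on $l,m,k$) such that for all $h\in(0,+\infty)$, writing $w=w(h)=\frac{\sqrt{1+4h}-1}{2}$: (i) if $n=2l+2m$, then $J_{2l,2m}(h)=\tilde\gamma_{l,m}h^{[n/2]}J_{0,0}(h)+\sum_{k=2}^{n}\hat\varphi_k(h)\,w^{k+\frac12}$ with $\deg\hat\varphi_k\le[\frac{n-k}{2}]$; (ii) if $n=2l+2m+1$, then $I_{2l,2m+1}(h)=\tilde\alpha_{l,m}h^{[\frac{n-1}{2}]}I_{0,1}(h)+\sum_{k=3}^{n}\tilde\varphi_k(h)\,w^{k+\frac12}$ and $J_{2l,2m+1}(h)=\tilde\delta_{l,m}h^{[\frac{n-1}{2}]}J_{0,1}(h)+\sum_{k=3}^{n}\tilde\psi_k(h)\,w^{k+\frac12}$, with $\deg\tilde\varphi_k,\deg\tilde\psi_k\le[\frac{n-k}{2}]$; (iii) if $n=2l+2m+2$, then $I_{2l+1,2m+1}(h)=\tilde\beta_{l,m}h^{[\frac{n-2}{2}]}I_{1,1}(h)+\sum_{k=4}^{n}\check\psi_k(h)\,w^{k}$ with $\deg\check\psi_k\le[\frac{n-k}{2}]$.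
   Context: For $h>0$ let $u=\sqrt{(\sqrt{1+4h}-1)/2}$ (so $u^4+u^2=h$), $\Gamma_h$ the circle $x^2+y^2=h$, $A=(u,u^2)$, $B=(u,-u^2)$, $C=(-u,-u^2)$. Let $\widehat{AB}$ be the arc of $\Gamma_h$ traversed clockwise from $A$ to $B$ through $(\sqrt h,0)$, and $\widehat{BC}$ the arc traversed clockwise from $B$ to $C$ through $(0,-\sqrt h)$. For integers $i,j\ge0$, $I_{i,j}(h)=\int_{\widehat{AB}}x^iy^jdx$ and $J_{i,j}(h)=\int_{\widehat{BC}}x^iy^jdx$ (line integrals along the oriented arcs). $[p]$ denotes the integer part of $p$. *)

theory Defs
  imports "HOL-Analysis.Analysis" "HOL-Computational_Algebra.Polynomial"
begin

definition wfun :: "real \<Rightarrow> real" where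
  "wfun h = (sqrt (1 + 4*h) - 1) / 2"

definition ufun :: "real \<Rightarrow> real" where
  "ufun h = sqrt ((sqrt (1 + 4*h) - 1) / 2)"

text \<open>Polar angle of A = (u, u^2) on the circle x^2+y^2=h (u>0, so the angle is arctan(u^2/u)).\<close>
definition thetaA :: "real \<Rightarrow> real" where
  "thetaA h = arctan (ufun h ^ 2 / ufun h)"

definition line_int_dx :: "(real \<times> real \<Rightarrow> real) \<Rightarrow> (real \<Rightarrow> real \<times> real) \<Rightarrow> real" where
  "line_int_dx P g = integral {0..1} (\<lambda>t. P (g t) * fst (vector_derivative g (at t)))"

text \<open>Arc AB of the circle x^2+y^2=h, clockwise from A through (sqrt h,0) to B.\<close>
definition arcAB :: "real \<Rightarrow> real \<Rightarrow> real \<times> real" where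
  "arcAB h t = (let a = thetaA h - 2 * thetaA h * t in (sqrt h * cos a, sqrt h * sin a))"

text \<open>Arc BC, clockwise from B through (0,-sqrt h) to C = (-u,-u^2).\<close>
definition arcBC :: "real \<Rightarrow> real \<Rightarrow> real \<times> real" where
  "arcBC h t = (let a = - thetaA h - (pi - 2 * thetaA h) * t in (sqrt h * cos a, sqrt h * sin a))"

definition Iint :: "nat \<Rightarrow> nat \<Rightarrow> real \<Rightarrow> real" where
  "Iint i j h = line_int_dx (\<lambda>(x, y). x ^ i * y ^ j) (arcAB h)"

definition Jint :: "nat \<Rightarrow> nat \<Rightarrow> real \<Rightarrow> real" where
  "Jint i j h = line_int_dx (\<lambda>(x, y). x ^ i * y ^ j) (arcBC h)"

end

theory Submission
  imports Defs
begin

text \<open>On the circle write \<open>x = \<surd>h cos a, y = \<surd>h sin a\<close>; along an arc from angle \<open>\<alpha>\<close> to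
  \<open>\<alpha> + \<beta>\<close> the integral of \<open>x\<^sup>i y\<^sup>j dx\<close> is \<open>h\<^bsup>(i+j+1)/2\<^esup> (\<Phi> \<alpha> - \<Phi> (\<alpha> + \<beta>))\<close> for any primitive \<open>\<Phi>\<close>
  of \<open>cos\<^sup>i sin\<^sup>j\<^sup>+\<^sup>1\<close>. These primitives are explicit: expanding the even power of \<open>cos\<close>
  or \<open>sin\<close> binomially gives a polynomial in \<open>cos\<close> or \<open>sin\<close>, except for
  \<open>cos\<^sup>2\<^sup>l sin\<^sup>2\<^sup>m\<^sup>+\<^sup>2\<close>, where Wallis' reduction formula adds a multiple of the angle.
  At \<open>A\<close> the angle \<open>\<theta>\<close> satisfies \<open>\<surd>h cos \<theta> = u\<close>, \<open>\<surd>h sin \<theta> = u\<^sup>2 = w\<close> and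
  \<open>h = w (1 + w)\<close>, so every algebraic contribution is \<open>u\<close> (or \<open>1\<close>) times a polynomial
  in \<open>w\<close>, while any angular contribution is proportional to that of the base integral.
  Subtracting the right multiple of \<open>h\<^sup>l\<^sup>+\<^sup>m\<close> times the base integral removes it, or
  else the lowest resp. highest power of \<open>w\<close>; what remains is a combination of the powers \<open>w\<^sup>k\<^sup>+\<^sup>1\<^sup>/\<^sup>2\<close>
  (resp. \<open>w\<^sup>k\<close>) with constant coefficients.\<close>

definition monomial_span :: "nat \<Rightarrow> nat \<Rightarrow> (real \<Rightarrow> real) set" where
  "monomial_span lo hi = {f. \<exists>c. \<forall>x. f x = (\<Sum>k=lo..hi. c k * x ^ k)}"

lemma monomial_span_zero: "(\<lambda>x. 0) \<in> monomial_span lo hi"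
  unfolding monomial_span_def by (intro CollectI exI[of _ "\<lambda>_. 0"]) simp

lemma monomial_span_add:
  assumes "f \<in> monomial_span lo hi" "g \<in> monomial_span lo hi"
  shows "(\<lambda>x. f x + g x) \<in> monomial_span lo hi"
proof -
  obtain c d where "\<And>x. f x = (\<Sum>k=lo..hi. c k * x ^ k)" "\<And>x. g x = (\<Sum>k=lo..hi. d k * x ^ k)"
    using assms unfolding monomial_span_def by blast
  then show ?thesis unfolding monomial_span_def
    by (intro CollectI exI[of _ "\<lambda>k. c k + d k"]) (simp add: sum.distrib algebra_simps)
qed

lemma monomial_span_cmult:
  assumes "f \<in> monomial_span lo hi"
  shows "(\<lambda>x. a * f x) \<in> monomial_span lo hi"
proof -
  obtain c where "\<And>x. f x = (\<Sum>k=lo..hi. c k * x ^ k)"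
    using assms unfolding monomial_span_def by blast
  then show ?thesis unfolding monomial_span_def
    by (intro CollectI exI[of _ "\<lambda>k. a * c k"]) (simp add: sum_distrib_left algebra_simps)
qed

lemma monomial_span_diff:
  assumes "f \<in> monomial_span lo hi" "g \<in> monomial_span lo hi"
  shows "(\<lambda>x. f x - g x) \<in> monomial_span lo hi"
  using monomial_span_add[OF assms(1) monomial_span_cmult[OF assms(2), of "-1"]] by simp

lemma monomial_span_sum:
  assumes "\<And>i. i \<in> S \<Longrightarrow> g i \<in> monomial_span lo hi"
  shows "(\<lambda>x. \<Sum>i\<in>S. g i x) \<in> monomial_span lo hi"
  using assms
proof (induction S rule: infinite_finite_induct)
  case (insert a S)
  then show ?case using monomial_span_add[of "g a" lo hi "\<lambda>x. \<Sum>i\<in>S. g i x"] by simp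
qed (simp_all add: monomial_span_zero)

lemma monomial_span_mono:
  assumes "f \<in> monomial_span lo hi" "lo' \<le> lo" "hi \<le> hi'"
  shows "f \<in> monomial_span lo' hi'"
proof -
  obtain c where c: "\<And>x. f x = (\<Sum>k=lo..hi. c k * x ^ k)"
    using assms(1) unfolding monomial_span_def by blast
  define c' where "c' k = (if k \<in> {lo..hi} then c k else 0)" for k
  have "(\<Sum>k=lo'..hi'. c' k * x ^ k) = (\<Sum>k=lo..hi. c k * x ^ k)" for x :: real
  proof -
    have "(\<Sum>k=lo'..hi'. c' k * x ^ k) = (\<Sum>k\<in>{lo'..hi'}. if k \<in> {lo..hi} then c k * x ^ k else 0)"
      unfolding c'_def by (intro sum.cong) auto
    also have "\<dots> = (\<Sum>k\<in>{lo'..hi'} \<inter> {lo..hi}. c k * x ^ k)"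
      by (rule sum.inter_restrict[symmetric]) simp
    also have "{lo'..hi'} \<inter> {lo..hi} = {lo..hi}"
      using assms by auto
    finally show ?thesis .
  qed
  then show ?thesis
    unfolding monomial_span_def using c by (intro CollectI exI[of _ c']) simp
qed

lemma monomial_span_power: "(\<lambda>x. x ^ a) \<in> monomial_span a a"
  unfolding monomial_span_def by (intro CollectI exI[of _ "\<lambda>_. 1"]) simp

lemma monomial_span_mult_x:
  assumes "f \<in> monomial_span lo hi"
  shows "(\<lambda>x. x * f x) \<in> monomial_span (Suc lo) (Suc hi)"
proof -
  obtain c where "\<And>x. f x = (\<Sum>k=lo..hi. c k * x ^ k)"
    using assms unfolding monomial_span_def by blast
  then show ?thesis unfolding monomial_span_def
    by (intro CollectI exI[of _ "\<lambda>k. c (k - 1)"])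
      (simp only: sum.shift_bounds_cl_Suc_ivl, simp add: sum_distrib_left algebra_simps)
qed

lemma monomial_span_mult_1_plus_x:
  assumes "f \<in> monomial_span lo hi"
  shows "(\<lambda>x. (1 + x) * f x) \<in> monomial_span lo (Suc hi)"
proof -
  have "(\<lambda>x. f x + x * f x) \<in> monomial_span lo (Suc hi)"
    using monomial_span_mono[OF assms] monomial_span_mono[OF monomial_span_mult_x[OF assms]]
    by (intro monomial_span_add) auto
  then show ?thesis by (simp add: algebra_simps)
qed

lemma monomial_span_power_1_plus: "(\<lambda>x. x ^ a * (1 + x) ^ b) \<in> monomial_span a (a + b)"
proof (induction b)
  case (Suc b)
  from monomial_span_mult_1_plus_x[OF this] show ?case by (simp add: algebra_simps)
qed (simp add: monomial_span_power)

lemma monomial_span_drop_lowest: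
  "(\<lambda>x. x ^ a * (1 + x) ^ b - x ^ a) \<in> monomial_span (Suc a) (a + b)"
proof (induction b)
  case (Suc b)
  have "(\<lambda>x. (1 + x) * (x ^ a * (1 + x) ^ b - x ^ a) + x ^ Suc a) \<in> monomial_span (Suc a) (a + Suc b)"
    using monomial_span_mult_1_plus_x[OF Suc.IH] monomial_span_mono[OF monomial_span_power[of "Suc a"]]
    by (intro monomial_span_add) auto
  then show ?case by (simp add: algebra_simps)
qed (simp add: monomial_span_zero)

lemma monomial_span_drop_highest:
  assumes "a + b = n"
  shows "(\<lambda>x. x ^ a * (1 + x) ^ b - x ^ n) \<in> monomial_span a (n - 1)"
proof (cases b)
  case (Suc c)
  have "(\<lambda>x. x ^ a * (1 + x) ^ Suc c - x ^ (a + Suc c)) \<in> monomial_span a (a + c)" for c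
  proof (induction c)
    case (Suc c)
    have "(\<lambda>x. x ^ a * (1 + x) ^ Suc c + x * (x ^ a * (1 + x) ^ Suc c - x ^ (a + Suc c)))
        \<in> monomial_span a (a + Suc c)"
      using monomial_span_power_1_plus[of a "Suc c"] monomial_span_mono[OF monomial_span_mult_x[OF Suc.IH]]
      by (intro monomial_span_add) auto
    then show ?case by (simp add: algebra_simps)
  qed (simp add: monomial_span_power algebra_simps)
  with Suc assms show ?thesis by auto
qed (use assms in \<open>simp add: monomial_span_zero\<close>)

lemma wfun_pos: "h > 0 \<Longrightarrow> wfun h > 0"
  unfolding wfun_def by (simp add: real_less_rsqrt)

lemma ufun_eq_sqrt_wfun: "ufun h = sqrt (wfun h)"
  by (simp add: ufun_def wfun_def)

lemma ufun_squared: "h > 0 \<Longrightarrow> ufun h ^ 2 = wfun h"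
  using wfun_pos[of h] by (simp add: ufun_eq_sqrt_wfun)

lemma wfun_mult_one_plus_wfun: "h \<ge> 0 \<Longrightarrow> wfun h * (1 + wfun h) = h"
  unfolding wfun_def by (simp add: field_simps)

lemma sqrt_mult_power_sum_powr:
  assumes "x > 0"
  shows "sqrt x * (\<Sum>k\<in>K. a k * x ^ k) = (\<Sum>k\<in>K. a k * x powr (real k + 1/2))"
  unfolding sum_distrib_left using assms
  by (intro sum.cong refl) (simp add: powr_add powr_realpow powr_half_sqrt)

lemma monomial_span_sqrt_expansion:
  assumes "F \<in> monomial_span lo hi"
  obtains c where
    "\<And>h. h > 0 \<Longrightarrow> ufun h * F (wfun h) = (\<Sum>k=lo..hi. c k * wfun h powr (real k + 1/2))"
proof -
  obtain c where "\<And>x. F x = (\<Sum>k=lo..hi. c k * x ^ k)"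
    using assms unfolding monomial_span_def by blast
  then show ?thesis
    using that sqrt_mult_power_sum_powr wfun_pos by (simp add: ufun_eq_sqrt_wfun)
qed

lemma thetaA_eq_arctan: "h > 0 \<Longrightarrow> thetaA h = arctan (ufun h)"
  using wfun_pos[of h] unfolding thetaA_def ufun_eq_sqrt_wfun by (simp add: real_div_sqrt)

lemma sqrt_cos_thetaA: "h > 0 \<Longrightarrow> sqrt h * cos (thetaA h) = ufun h"
  and sqrt_sin_thetaA: "h > 0 \<Longrightarrow> sqrt h * sin (thetaA h) = wfun h"
proof -
  assume h: "h > 0"
  have w: "wfun h > 0" "ufun h ^ 2 = wfun h"
    using wfun_pos[OF h] ufun_squared[OF h] by auto
  have "sqrt h = sqrt (wfun h) * sqrt (1 + wfun h)"
    using wfun_mult_one_plus_wfun[of h] h by (metis less_imp_le real_sqrt_mult)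
  then have sqrt_h: "sqrt h = ufun h * sqrt (1 + ufun h ^ 2)"
    using w(2) by (simp add: ufun_eq_sqrt_wfun)
  have "sqrt (1 + ufun h ^ 2) > 0"
    by (simp add: add_pos_nonneg)
  then show "sqrt h * cos (thetaA h) = ufun h" "sqrt h * sin (thetaA h) = wfun h"
    unfolding thetaA_eq_arctan[OF h] cos_arctan sin_arctan sqrt_h using w
    by (simp_all add: power2_eq_square)
qed

lemma sqrt_power_even: "h \<ge> 0 \<Longrightarrow> sqrt h ^ (2*n) = h ^ n"
  by (simp add: power_mult)

lemma circle_monomial_at_A:
  assumes "h > 0"
  shows "sqrt h ^ (2*e + p + q) * cos (thetaA h) ^ p * sin (thetaA h) ^ q
    = (wfun h * (1 + wfun h)) ^ e * ufun h ^ p * wfun h ^ q"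
proof -
  have "sqrt h ^ (2*e) = (wfun h * (1 + wfun h)) ^ e"
    using assms by (simp add: sqrt_power_even wfun_mult_one_plus_wfun)
  moreover have "sqrt h ^ (2*e + p + q) * cos (thetaA h) ^ p * sin (thetaA h) ^ q
    = sqrt h ^ (2*e) * (sqrt h * cos (thetaA h)) ^ p * (sqrt h * sin (thetaA h)) ^ q"
    by (simp add: power_add power_mult_distrib algebra_simps)
  ultimately show ?thesis
    unfolding sqrt_cos_thetaA[OF assms] sqrt_sin_thetaA[OF assms] by simp
qed

lemma ufun_odd_power: "h > 0 \<Longrightarrow> ufun h ^ (2*n+1) = wfun h ^ n * ufun h"
  by (simp add: power_mult ufun_squared)

lemma cos_odd_power_at_A:
  assumes h: "h > 0" and "r \<le> m"
  shows "sqrt h ^ (2*l+2*m+1) * cos (thetaA h) ^ (2*l+2*r+1)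
    = ufun h * (wfun h ^ (l+m) * (1 + wfun h) ^ (m-r))"
proof -
  have e1: "2*l+2*m+1 = 2*(m-r) + (2*l+2*r+1) + 0" and e2: "m-r + (l+r) = l+m"
    using assms(2) by simp_all
  have w_pow: "wfun h ^ (l+m) = wfun h ^ (m-r) * wfun h ^ (l+r)"
    unfolding power_add[symmetric] e2 ..
  have u_pow: "ufun h ^ (2*l+2*r+1) = wfun h ^ (l+r) * ufun h"
    using ufun_odd_power[OF h, of "l+r"] by (simp add: algebra_simps)
  have "sqrt h ^ (2*l+2*m+1) * cos (thetaA h) ^ (2*l+2*r+1)
      = sqrt h ^ (2*(m-r) + (2*l+2*r+1) + 0) * cos (thetaA h) ^ (2*l+2*r+1) * sin (thetaA h) ^ 0"
    unfolding e1 by simp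
  also have "\<dots> = (wfun h * (1 + wfun h)) ^ (m-r) * ufun h ^ (2*l+2*r+1) * wfun h ^ 0"
    by (rule circle_monomial_at_A[OF h])
  also have "\<dots> = ufun h * (wfun h ^ (l+m) * (1 + wfun h) ^ (m-r))"
    unfolding w_pow u_pow by (simp only: power_mult_distrib mult_ac power_0 mult_1_right)
  finally show ?thesis .
qed

lemma sin_odd_power_at_A:
  assumes h: "h > 0" and "r \<le> l"
  shows "sqrt h ^ ((2*l+1)+(2*m+1)+1) * sin (thetaA h) ^ (2*m+2*r+3)
    = wfun h ^ (2*m+l+r+3) * (1 + wfun h) ^ (l-r)"
proof -
  have e1: "(2*l+1)+(2*m+1)+1 = 2*(l-r) + 0 + (2*m+2*r+3)" and e2: "l-r + (2*m+2*r+3) = 2*m+l+r+3"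
    using assms(2) by simp_all
  have w_pow: "wfun h ^ (2*m+l+r+3) = wfun h ^ (l-r) * wfun h ^ (2*m+2*r+3)"
    unfolding power_add[symmetric] e2 ..
  have "sqrt h ^ ((2*l+1)+(2*m+1)+1) * sin (thetaA h) ^ (2*m+2*r+3)
      = sqrt h ^ (2*(l-r) + 0 + (2*m+2*r+3)) * cos (thetaA h) ^ 0 * sin (thetaA h) ^ (2*m+2*r+3)"
    unfolding e1 by simp
  also have "\<dots> = (wfun h * (1 + wfun h)) ^ (l-r) * ufun h ^ 0 * wfun h ^ (2*m+2*r+3)"
    by (rule circle_monomial_at_A[OF h])
  also have "\<dots> = wfun h ^ (2*m+l+r+3) * (1 + wfun h) ^ (l-r)"
    unfolding w_pow by (simp only: power_mult_distrib mult_ac power_0 mult_1_right)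
  finally show ?thesis .
qed

lemma cos_sin_odd_power_at_A:
  assumes h: "h > 0" and "j \<le> n"
  shows "h ^ (n+1) * cos (thetaA h) * sin (thetaA h) ^ (2*j+1)
    = ufun h * (wfun h ^ (n+j+1) * (1 + wfun h) ^ (n-j))"
proof -
  have e1: "2*(n-j) + 1 + (2*j+1) = 2*(n+1)" and e2: "n-j + (2*j+1) = n+j+1"
    using assms(2) by simp_all
  have h_pow: "h ^ (n+1) = sqrt h ^ (2*(n-j) + 1 + (2*j+1))"
    unfolding e1 using h by (simp add: sqrt_power_even)
  have w_pow: "wfun h ^ (n+j+1) = wfun h ^ (n-j) * wfun h ^ (2*j+1)"
    unfolding power_add[symmetric] e2 ..
  have "h ^ (n+1) * cos (thetaA h) * sin (thetaA h) ^ (2*j+1)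
      = sqrt h ^ (2*(n-j) + 1 + (2*j+1)) * cos (thetaA h) ^ 1 * sin (thetaA h) ^ (2*j+1)"
    unfolding h_pow by simp
  also have "\<dots> = (wfun h * (1 + wfun h)) ^ (n-j) * ufun h ^ 1 * wfun h ^ (2*j+1)"
    by (rule circle_monomial_at_A[OF h])
  also have "\<dots> = ufun h * (wfun h ^ (n+j+1) * (1 + wfun h) ^ (n-j))"
    unfolding w_pow by (simp only: power_mult_distrib power_one_right mult_ac)
  finally show ?thesis .
qed

lemma line_int_dx_circle_arc:
  fixes \<Phi> :: "real \<Rightarrow> real"
  assumes h: "h \<ge> 0"
    and \<Phi>: "\<And>a. (\<Phi> has_real_derivative (cos a ^ i * sin a ^ (j+1))) (at a)"
  shows "line_int_dx (\<lambda>(x, y). x ^ i * y ^ j) (\<lambda>t. (sqrt h * cos (\<alpha> + \<beta>*t), sqrt h * sin (\<alpha> + \<beta>*t)))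
     = sqrt h ^ (i+j+1) * (\<Phi> \<alpha> - \<Phi> (\<alpha> + \<beta>))"
proof -
  let ?g = "\<lambda>t. (sqrt h * cos (\<alpha> + \<beta>*t), sqrt h * sin (\<alpha> + \<beta>*t))"
  let ?F = "\<lambda>t. - (sqrt h ^ (i+j+1) * \<Phi> (\<alpha> + \<beta>*t))"
  have g': "vector_derivative ?g (at t) = (- sqrt h * sin (\<alpha> + \<beta>*t) * \<beta>, sqrt h * cos (\<alpha> + \<beta>*t) * \<beta>)" for t
    by (intro vector_derivative_at has_vector_derivative_Pair)
      (auto intro!: derivative_eq_intros simp flip: has_real_derivative_iff_has_vector_derivative)
  have "(?F has_real_derivative - (sqrt h ^ (i+j+1) * ((cos (\<alpha> + \<beta>*t) ^ i * sin (\<alpha> + \<beta>*t) ^ (j+1)) * \<beta>))) (at t)" for t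
    by (auto intro!: derivative_eq_intros DERIV_chain2[OF \<Phi>])
  moreover have "- (sqrt h ^ (i+j+1) * ((cos (\<alpha> + \<beta>*t) ^ i * sin (\<alpha> + \<beta>*t) ^ (j+1)) * \<beta>))
       = (case ?g t of (x, y) \<Rightarrow> x ^ i * y ^ j) * fst (vector_derivative ?g (at t))" for t
    unfolding g' by (simp add: power_mult_distrib power_add algebra_simps)
  ultimately have "((\<lambda>t. (case ?g t of (x, y) \<Rightarrow> x ^ i * y ^ j) * fst (vector_derivative ?g (at t)))
      has_integral (?F 1 - ?F 0)) {0..1}"
    by (intro fundamental_theorem_of_calculus)
      (auto simp: has_real_derivative_iff_has_vector_derivative intro: has_vector_derivative_at_within)
  from integral_unique[OF this] show ?thesis
    unfolding line_int_dx_def by (simp add: algebra_simps)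
qed

lemma Iint_eq_antiderivative_diff:
  assumes "h > 0" "\<And>a. (\<Phi> has_real_derivative (cos a ^ i * sin a ^ (j+1))) (at a)"
  shows "Iint i j h = sqrt h ^ (i+j+1) * (\<Phi> (thetaA h) - \<Phi> (- thetaA h))"
proof -
  have arc: "arcAB h = (\<lambda>t. (sqrt h * cos (thetaA h + (-2 * thetaA h)*t), sqrt h * sin (thetaA h + (-2 * thetaA h)*t)))"
    unfolding arcAB_def by (simp add: Let_def algebra_simps)
  then have "Iint i j h = sqrt h ^ (i+j+1) * (\<Phi> (thetaA h) - \<Phi> (thetaA h + -2 * thetaA h))"
    unfolding Iint_def arc using assms by (intro line_int_dx_circle_arc) auto
  then show ?thesis by simp
qed

lemma Jint_eq_antiderivative_diff:
  assumes "h > 0" "\<And>a. (\<Phi> has_real_derivative (cos a ^ i * sin a ^ (j+1))) (at a)"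
  shows "Jint i j h = sqrt h ^ (i+j+1) * (\<Phi> (- thetaA h) - \<Phi> (thetaA h - pi))"
proof -
  have arc: "arcBC h = (\<lambda>t. (sqrt h * cos (- thetaA h + (2 * thetaA h - pi)*t), sqrt h * sin (- thetaA h + (2 * thetaA h - pi)*t)))"
    unfolding arcBC_def by (simp add: Let_def algebra_simps)
  then have "Jint i j h = sqrt h ^ (i+j+1) * (\<Phi> (- thetaA h) - \<Phi> (- thetaA h + (2 * thetaA h - pi)))"
    unfolding Jint_def arc using assms by (intro line_int_dx_circle_arc) auto
  then show ?thesis by simp
qed

lemma sin_odd_power_binomial:
  "sin a ^ (2*m+1) = (\<Sum>r\<le>m. real (m choose r) * (-1)^r * cos a ^ (2*r)) * sin a"
proof -
  have "sin a ^ (2*m+1) = (- (cos a ^ 2) + 1) ^ m * sin a"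
    by (simp add: power_mult sin_squared_eq)
  also have "(- (cos a ^ 2) + 1) ^ m = (\<Sum>r\<le>m. real (m choose r) * (-1)^r * cos a ^ (2*r))"
    unfolding binomial_ring by (intro sum.cong refl) (simp add: power_mult flip: power_minus)
  finally show ?thesis .
qed

lemma cos_even_power_binomial:
  "cos a ^ (2*l) = (\<Sum>r\<le>l. real (l choose r) * (-1)^r * sin a ^ (2*r))"
proof -
  have "cos a ^ (2*l) = (- (sin a ^ 2) + 1) ^ l"
    by (simp add: power_mult cos_squared_eq)
  also have "\<dots> = (\<Sum>r\<le>l. real (l choose r) * (-1)^r * sin a ^ (2*r))"
    unfolding binomial_ring by (intro sum.cong refl) (simp add: power_mult flip: power_minus)
  finally show ?thesis .
qed

lemma DERIV_cos_Suc_power: "((\<lambda>a. cos a ^ (n+1)) has_real_derivative (real (n+1) * cos a ^ n * (- sin a))) (at a)"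
  using DERIV_power[OF DERIV_cos[of a], of "Suc n"] by (simp add: ac_simps)

lemma DERIV_sin_Suc_power: "((\<lambda>a. sin a ^ (n+1)) has_real_derivative (real (n+1) * sin a ^ n * cos a)) (at a)"
  using DERIV_power[OF DERIV_sin[of a], of "Suc n"] by (simp add: ac_simps)

definition prim_even_odd :: "nat \<Rightarrow> nat \<Rightarrow> real \<Rightarrow> real" where
  "prim_even_odd l m a = - (\<Sum>r\<le>m. real (m choose r) * (-1)^r * cos a ^ (2*l+2*r+1) / real (2*l+2*r+1))"

lemma prim_even_odd_deriv:
  "(prim_even_odd l m has_real_derivative (cos a ^ (2*l) * sin a ^ (2*m+1))) (at a)"
proof -
  have "(prim_even_odd l m has_real_derivative - (\<Sum>r\<le>m. real (m choose r) * (-1)^r *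
      (real (2*l+2*r+1) * cos a ^ (2*l+2*r) * (- sin a)) / real (2*l+2*r+1))) (at a)"
    unfolding prim_even_odd_def[abs_def]
    by (intro DERIV_minus DERIV_sum DERIV_cdivide DERIV_cmult DERIV_cos_Suc_power)
  also have "- (\<Sum>r\<le>m. real (m choose r) * (-1)^r *
      (real (2*l+2*r+1) * cos a ^ (2*l+2*r) * (- sin a)) / real (2*l+2*r+1))
     = cos a ^ (2*l) * ((\<Sum>r\<le>m. real (m choose r) * (-1)^r * cos a ^ (2*r)) * sin a)"
    unfolding sum_negf[symmetric] sum_distrib_left sum_distrib_right
    by (intro sum.cong refl) (simp add: power_add del: of_nat_add of_nat_Suc)
  finally show ?thesis
    by (simp only: sin_odd_power_binomial)
qed

definition prim_odd_even :: "nat \<Rightarrow> nat \<Rightarrow> real \<Rightarrow> real" where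
  "prim_odd_even l m a = (\<Sum>r\<le>l. real (l choose r) * (-1)^r * sin a ^ (2*m+2*r+2+1) / real (2*m+2*r+2+1))"

lemma prim_odd_even_deriv:
  "(prim_odd_even l m has_real_derivative (cos a ^ (2*l+1) * sin a ^ (2*m+1+1))) (at a)"
proof -
  have "(prim_odd_even l m has_real_derivative (\<Sum>r\<le>l. real (l choose r) * (-1)^r *
      (real (2*m+2*r+2+1) * sin a ^ (2*m+2*r+2) * cos a) / real (2*m+2*r+2+1))) (at a)"
    unfolding prim_odd_even_def[abs_def]
    by (intro DERIV_sum DERIV_cdivide DERIV_cmult DERIV_sin_Suc_power)
  also have "(\<Sum>r\<le>l. real (l choose r) * (-1)^r *
      (real (2*m+2*r+2+1) * sin a ^ (2*m+2*r+2) * cos a) / real (2*m+2*r+2+1))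
     = sin a ^ (2*m+2) * cos a * (\<Sum>r\<le>l. real (l choose r) * (-1)^r * sin a ^ (2*r))"
    unfolding sum_distrib_left
    by (intro sum.cong refl) (simp add: power_add del: of_nat_add of_nat_Suc)
  finally show ?thesis
    by (simp only: cos_even_power_binomial[symmetric]) (simp add: power_add ac_simps)
qed

text \<open>\<open>wallis_ratio\<close> and \<open>sin_prim_coeff\<close> are the coefficients produced by iterating the
  reduction formula
  \<open>\<integral> sin\<^sup>2\<^sup>k\<^sup>+\<^sup>2 = - sin\<^sup>2\<^sup>k\<^sup>+\<^sup>1 cos / (2k+2) + (2k+1)/(2k+2) \<integral> sin\<^sup>2\<^sup>k\<close>.\<close>

primrec wallis_ratio :: "nat \<Rightarrow> real" where
  "wallis_ratio 0 = 1"
| "wallis_ratio (Suc k) = (2*real k+1)/(2*real k+2) * wallis_ratio k"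

primrec sin_prim_coeff :: "nat \<Rightarrow> nat \<Rightarrow> real" where
  "sin_prim_coeff 0 j = 0"
| "sin_prim_coeff (Suc k) j = (if j = k then -1/(2*real k+2) else 0) + (2*real k+1)/(2*real k+2) * sin_prim_coeff k j"

declare wallis_ratio.simps(2) [simp del] sin_prim_coeff.simps(2) [simp del]

definition sin_prim_poly :: "nat \<Rightarrow> real \<Rightarrow> real" where
  "sin_prim_poly k x = (\<Sum>j<k. sin_prim_coeff k j * x ^ (2*j+1))"

definition prim_sin_even :: "nat \<Rightarrow> real \<Rightarrow> real" where
  "prim_sin_even k a = wallis_ratio k * a + cos a * sin_prim_poly k (sin a)"

lemma sin_prim_coeff_eq_0: "k \<le> j \<Longrightarrow> sin_prim_coeff k j = 0"
  by (induction k) (auto simp: sin_prim_coeff.simps)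

lemma sin_prim_coeff_0: "k \<ge> 1 \<Longrightarrow> sin_prim_coeff k 0 = - wallis_ratio k"
proof (induction k rule: nat_induct_at_least)
  case (Suc k)
  then show ?case by (simp add: sin_prim_coeff_eq_0 sin_prim_coeff.simps wallis_ratio.simps)
qed (simp add: sin_prim_coeff.simps wallis_ratio.simps)

lemma sin_prim_poly_Suc:
  "sin_prim_poly (Suc k) x = - (x ^ (2*k+1)) / (2*real k+2) + (2*real k+1)/(2*real k+2) * sin_prim_poly k x"
proof -
  have "sin_prim_poly (Suc k) x = (\<Sum>j<Suc k. (if j = k then -1/(2*real k+2) else 0) * x ^ (2*j+1))
      + (2*real k+1)/(2*real k+2) * (\<Sum>j<Suc k. sin_prim_coeff k j * x ^ (2*j+1))"
    unfolding sin_prim_poly_def sin_prim_coeff.simps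
    by (simp only: distrib_right sum.distrib sum_distrib_left mult.assoc)
  also have "(\<Sum>j<Suc k. sin_prim_coeff k j * x ^ (2*j+1)) = sin_prim_poly k x"
    unfolding sin_prim_poly_def by (simp add: sin_prim_coeff_eq_0)
  finally show ?thesis
    by (simp add: if_distrib cong: if_cong)
qed

lemma prim_sin_even_Suc:
  "prim_sin_even (Suc k) a = - (sin a ^ (2*k+1) * cos a) / (2*real k+2) + (2*real k+1)/(2*real k+2) * prim_sin_even k a"
  unfolding prim_sin_even_def sin_prim_poly_Suc wallis_ratio.simps
  by (simp add: algebra_simps add_divide_distrib)

lemma prim_sin_even_deriv: "(prim_sin_even k has_real_derivative sin a ^ (2*k)) (at a)"
proof (induction k)
  case 0
  show ?case unfolding prim_sin_even_def sin_prim_poly_def by (auto intro!: derivative_eq_intros)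
next
  case (Suc k)
  have "((\<lambda>a. - (sin a ^ (2*k+1) * cos a) / (2*real k+2) + (2*real k+1)/(2*real k+2) * prim_sin_even k a)
    has_real_derivative (- (real (2*k+1) * sin a ^ (2*k) * cos a * cos a + - sin a * sin a ^ (2*k+1)) / (2*real k+2)
      + (2*real k+1)/(2*real k+2) * sin a ^ (2*k))) (at a)"
    by (intro DERIV_add DERIV_cdivide DERIV_cmult DERIV_mult DERIV_minus DERIV_sin_Suc_power DERIV_cos Suc.IH)
  moreover have "- (real (2*k+1) * sin a ^ (2*k) * cos a * cos a + - sin a * sin a ^ (2*k+1)) / (2*real k+2)
      + (2*real k+1)/(2*real k+2) * sin a ^ (2*k) = sin a ^ (2 * Suc k)"
  proof -
    have "cos a * cos a = 1 - sin a * sin a"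
      using sin_cos_squared_add[of a] by (simp add: power2_eq_square)
    then have cos_sq: "real (2*k+1) * sin a ^ (2*k) * cos a * cos a
        = real (2*k+1) * sin a ^ (2*k) * (1 - sin a * sin a)"
      by (simp only: mult.assoc)
    have "- (real (2*k+1) * sin a ^ (2*k) * (1 - sin a * sin a) + - sin a * sin a ^ (2*k+1))
        + (2*real k+1) * sin a ^ (2*k) = (2*real k+2) * sin a ^ (2 * Suc k)"
      by (simp add: algebra_simps power_add)
    then show ?thesis
      unfolding cos_sq by (simp add: add_divide_distrib[symmetric] times_divide_eq_left)
  qed
  ultimately show ?case
    unfolding prim_sin_even_Suc[abs_def] by simp
qed

lemma prim_sin_even_eq:
  assumes "k \<ge> 1"
  shows "prim_sin_even k a = wallis_ratio k * (a - cos a * sin a)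
    + cos a * (\<Sum>j\<in>{1..<k}. sin_prim_coeff k j * sin a ^ (2*j+1))"
proof -
  have "{..<k} = insert 0 {1..<k}"
    using assms by auto
  then show ?thesis
    unfolding prim_sin_even_def sin_prim_poly_def using sin_prim_coeff_0[OF assms]
    by (simp add: algebra_simps)
qed

definition wallis_comb :: "nat \<Rightarrow> nat \<Rightarrow> real" where
  "wallis_comb l m = (\<Sum>r\<le>l. real (l choose r) * (-1)^r * wallis_ratio (m+1+r))"

definition sin_prim_comb :: "nat \<Rightarrow> nat \<Rightarrow> real \<Rightarrow> real" where
  "sin_prim_comb l m x = (\<Sum>r\<le>l. real (l choose r) * (-1)^r *
      (\<Sum>j\<in>{1..<m+1+r}. sin_prim_coeff (m+1+r) j * x ^ (2*j+1)))"

definition prim_even_even :: "nat \<Rightarrow> nat \<Rightarrow> real \<Rightarrow> real" where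
  "prim_even_even l m a = (\<Sum>r\<le>l. real (l choose r) * (-1)^r * prim_sin_even (m+1+r) a)"

lemma prim_even_even_deriv:
  "(prim_even_even l m has_real_derivative (cos a ^ (2*l) * sin a ^ (2*m+1+1))) (at a)"
proof -
  have "(prim_even_even l m has_real_derivative (\<Sum>r\<le>l. real (l choose r) * (-1)^r * sin a ^ (2*(m+1+r)))) (at a)"
    unfolding prim_even_even_def[abs_def] by (intro DERIV_sum DERIV_cmult prim_sin_even_deriv)
  also have "(\<Sum>r\<le>l. real (l choose r) * (-1)^r * sin a ^ (2*(m+1+r)))
     = sin a ^ (2*m+2) * (\<Sum>r\<le>l. real (l choose r) * (-1)^r * sin a ^ (2*r))"
    unfolding sum_distrib_left by (intro sum.cong refl) (simp add: power_add)
  finally show ?thesis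
    by (simp only: cos_even_power_binomial[symmetric]) (simp add: ac_simps)
qed

lemma prim_even_even_eq:
  "prim_even_even l m a = wallis_comb l m * (a - cos a * sin a) + cos a * sin_prim_comb l m (sin a)"
proof -
  have "prim_even_even l m a = (\<Sum>r\<le>l. (a - cos a * sin a) * (real (l choose r) * (-1)^r * wallis_ratio (m+1+r))
      + cos a * (real (l choose r) * (-1)^r * (\<Sum>j\<in>{1..<m+1+r}. sin_prim_coeff (m+1+r) j * sin a ^ (2*j+1))))"
    unfolding prim_even_even_def
    by (intro sum.cong refl) (subst prim_sin_even_eq, simp_all only: algebra_simps le_add2)
  also have "\<dots> = wallis_comb l m * (a - cos a * sin a) + cos a * sin_prim_comb l m (sin a)"
    unfolding wallis_comb_def sin_prim_comb_def by (simp only: sum.distrib sum_distrib_left mult.commute)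
  finally show ?thesis .
qed

lemma sin_prim_comb_minus: "sin_prim_comb l m (- x) = - sin_prim_comb l m x"
proof -
  have "(- x) ^ (2*j+1) = - (x ^ (2*j+1))" for j
    by (simp add: power_minus_odd)
  then show ?thesis
    unfolding sin_prim_comb_def by (simp only: mult_minus_right sum_negf)
qed

definition even_even_coeff :: "nat \<Rightarrow> nat \<Rightarrow> nat \<Rightarrow> real" where
  "even_even_coeff l m r = -2 * real (m choose r) * (-1)^r / real (2*l+2*r+1)"

lemma Jint_even_even_closed_form:
  assumes h: "h > 0"
  shows "Jint (2*l) (2*m) h
    = ufun h * (\<Sum>r\<le>m. even_even_coeff l m r * wfun h ^ (l+m) * (1 + wfun h) ^ (m-r))"
proof -
  define \<theta> where "\<theta> = thetaA h"
  define c where "c = even_even_coeff l m"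
  have "Jint (2*l) (2*m) h = sqrt h ^ (2*l+2*m+1) * (prim_even_odd l m (-\<theta>) - prim_even_odd l m (\<theta> - pi))"
    using Jint_eq_antiderivative_diff[OF h prim_even_odd_deriv] unfolding \<theta>_def by simp
  also have "prim_even_odd l m (-\<theta>) - prim_even_odd l m (\<theta> - pi) = (\<Sum>r\<le>m. c r * cos \<theta> ^ (2*l+2*r+1))"
    unfolding prim_even_odd_def c_def even_even_coeff_def
    by (simp add: cos_diff sum_negf[symmetric] sum_subtractf[symmetric] power_minus_odd
        del: of_nat_add of_nat_Suc, intro sum.cong refl, simp add: field_simps)
  also have "sqrt h ^ (2*l+2*m+1) * (\<Sum>r\<le>m. c r * cos \<theta> ^ (2*l+2*r+1))
      = ufun h * (\<Sum>r\<le>m. c r * wfun h ^ (l+m) * (1 + wfun h) ^ (m-r))"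
    unfolding sum_distrib_left
  proof (intro sum.cong refl)
    fix r assume "r \<in> {..m}"
    then have "sqrt h ^ (2*l+2*m+1) * cos \<theta> ^ (2*l+2*r+1) = ufun h * (wfun h ^ (l+m) * (1 + wfun h) ^ (m-r))"
      unfolding \<theta>_def by (intro cos_odd_power_at_A[OF h]) simp
    then show "sqrt h ^ (2*l+2*m+1) * (c r * cos \<theta> ^ (2*l+2*r+1))
        = ufun h * (c r * wfun h ^ (l+m) * (1 + wfun h) ^ (m-r))"
      by (metis (no_types, lifting) mult.assoc mult.left_commute)
  qed
  finally show ?thesis
    unfolding c_def .
qed

definition odd_odd_coeff :: "nat \<Rightarrow> nat \<Rightarrow> nat \<Rightarrow> real" where
  "odd_odd_coeff l m r = 2 * real (l choose r) * (-1)^r / real (2*m+2*r+3)"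

lemma Iint_odd_odd_closed_form:
  assumes h: "h > 0"
  shows "Iint (2*l+1) (2*m+1) h
    = (\<Sum>r\<le>l. odd_odd_coeff l m r * wfun h ^ (2*m+l+r+3) * (1 + wfun h) ^ (l-r))"
proof -
  define \<theta> where "\<theta> = thetaA h"
  define c where "c = odd_odd_coeff l m"
  have "Iint (2*l+1) (2*m+1) h = sqrt h ^ ((2*l+1)+(2*m+1)+1) * (prim_odd_even l m \<theta> - prim_odd_even l m (-\<theta>))"
    unfolding \<theta>_def by (rule Iint_eq_antiderivative_diff[OF h prim_odd_even_deriv])
  also have "prim_odd_even l m \<theta> - prim_odd_even l m (-\<theta>) = (\<Sum>r\<le>l. c r * sin \<theta> ^ (2*m+2*r+3))"
    unfolding prim_odd_even_def c_def odd_odd_coeff_def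
    by (simp add: sum_subtractf[symmetric] power_minus_odd del: of_nat_add of_nat_Suc,
        intro sum.cong refl, simp add: field_simps power_add power3_eq_cube)
  also have "sqrt h ^ ((2*l+1)+(2*m+1)+1) * (\<Sum>r\<le>l. c r * sin \<theta> ^ (2*m+2*r+3))
      = (\<Sum>r\<le>l. c r * wfun h ^ (2*m+l+r+3) * (1 + wfun h) ^ (l-r))"
    unfolding sum_distrib_left
  proof (intro sum.cong refl)
    fix r assume "r \<in> {..l}"
    then have "sqrt h ^ ((2*l+1)+(2*m+1)+1) * sin \<theta> ^ (2*m+2*r+3) = wfun h ^ (2*m+l+r+3) * (1 + wfun h) ^ (l-r)"
      unfolding \<theta>_def by (intro sin_odd_power_at_A[OF h]) simp
    then show "sqrt h ^ ((2*l+1)+(2*m+1)+1) * (c r * sin \<theta> ^ (2*m+2*r+3))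
        = c r * wfun h ^ (2*m+l+r+3) * (1 + wfun h) ^ (l-r)"
      by (metis (no_types, lifting) mult.assoc mult.left_commute)
  qed
  finally show ?thesis
    unfolding c_def .
qed

lemma Iint_even_odd_closed_form:
  assumes h: "h > 0"
  shows "Iint (2*l) (2*m+1) h = h ^ (l+m+1) *
    (2 * wallis_comb l m * (thetaA h - cos (thetaA h) * sin (thetaA h))
      + 2 * cos (thetaA h) * sin_prim_comb l m (sin (thetaA h)))"
proof -
  have "2*l + (2*m+1) + 1 = 2*(l+m+1)"
    by simp
  then have "Iint (2*l) (2*m+1) h = h ^ (l+m+1) * (prim_even_even l m (thetaA h) - prim_even_even l m (- thetaA h))"
    using Iint_eq_antiderivative_diff[OF h prim_even_even_deriv] sqrt_power_even[of h "l+m+1"] h by simp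
  then show ?thesis
    by (simp add: prim_even_even_eq sin_prim_comb_minus algebra_simps)
qed

lemma Jint_even_odd_closed_form:
  assumes h: "h > 0"
  shows "Jint (2*l) (2*m+1) h = h ^ (l+m+1) *
    (wallis_comb l m * (pi - 2 * thetaA h + 2 * cos (thetaA h) * sin (thetaA h))
      - 2 * cos (thetaA h) * sin_prim_comb l m (sin (thetaA h)))"
proof -
  have "2*l + (2*m+1) + 1 = 2*(l+m+1)"
    by simp
  then have "Jint (2*l) (2*m+1) h = h ^ (l+m+1) * (prim_even_even l m (- thetaA h) - prim_even_even l m (thetaA h - pi))"
    using Jint_eq_antiderivative_diff[OF h prim_even_even_deriv] sqrt_power_even[of h "l+m+1"] h by simp
  then show ?thesis
    by (simp add: prim_even_even_eq sin_prim_comb_minus cos_diff sin_diff algebra_simps)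
qed

definition sin_prim_comb_poly :: "nat \<Rightarrow> nat \<Rightarrow> real \<Rightarrow> real" where
  "sin_prim_comb_poly l m x = (\<Sum>r\<le>l. real (l choose r) * (-1)^r *
      (\<Sum>j\<in>{1..<m+1+r}. sin_prim_coeff (m+1+r) j * (x ^ (l+m+j+1) * (1+x) ^ (l+m-j))))"

lemma sin_prim_comb_poly_in_span: "sin_prim_comb_poly l m \<in> monomial_span (l+m+2) (2*l+2*m+1)"
  unfolding sin_prim_comb_poly_def
proof (intro monomial_span_sum monomial_span_cmult)
  fix r j assume "r \<in> {..l}" "j \<in> {1..<m+1+r}"
  then show "(\<lambda>x. x ^ (l+m+j+1) * (1+x) ^ (l+m-j)) \<in> monomial_span (l+m+2) (2*l+2*m+1)"
    using monomial_span_power_1_plus[of "l+m+j+1" "l+m-j"] by (auto elim!: monomial_span_mono)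
qed

lemma sin_prim_comb_at_A:
  assumes h: "h > 0"
  shows "h ^ (l+m+1) * cos (thetaA h) * sin_prim_comb l m (sin (thetaA h)) = ufun h * sin_prim_comb_poly l m (wfun h)"
  unfolding sin_prim_comb_def sin_prim_comb_poly_def sum_distrib_left
proof (intro sum.cong refl)
  fix r j assume "r \<in> {..l}" "j \<in> {1..<m+1+r}"
  then have "h ^ (l+m+1) * cos (thetaA h) * sin (thetaA h) ^ (2*j+1)
      = ufun h * (wfun h ^ (l+m+j+1) * (1 + wfun h) ^ (l+m-j))"
    by (intro cos_sin_odd_power_at_A[OF h]) auto
  then show "h ^ (l+m+1) * cos (thetaA h) * (real (l choose r) * (-1)^r * (sin_prim_coeff (m+1+r) j * sin (thetaA h) ^ (2*j+1)))
      = ufun h * (real (l choose r) * (-1)^r * (sin_prim_coeff (m+1+r) j * (wfun h ^ (l+m+j+1) * (1 + wfun h) ^ (l+m-j))))"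
    by (metis (no_types, lifting) mult.left_commute)
qed

lemma Jint_even_even_reduction:
  assumes "l + m \<ge> 1"
  obtains \<gamma> F where "F \<in> monomial_span 2 (2*l+2*m)"
    "\<And>h. h > 0 \<Longrightarrow> Jint (2*l) (2*m) h = \<gamma> * h ^ (l+m) * Jint 0 0 h + ufun h * F (wfun h)"
proof -
  define c where "c = even_even_coeff l m"
  define S where "S = (\<Sum>r\<le>m. c r)"
  \<comment> \<open>Since \<open>J\<^sub>0\<^sub>,\<^sub>0 = -2u\<close>, the choice \<open>\<gamma> = -S/2\<close> cancels the lowest power \<open>w\<^sup>l\<^sup>+\<^sup>m\<close>.\<close>
  define F where "F x = (\<Sum>r\<le>m. c r * (x ^ (l+m) * (1 + x) ^ (m-r) - x ^ (l+m)))
    - S * (x ^ (l+m) * (1 + x) ^ (l+m) - x ^ (l+m))" for x :: real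
  have "F \<in> monomial_span (Suc (l+m)) (2*l+2*m)"
    unfolding F_def[abs_def]
    by (intro monomial_span_diff monomial_span_sum monomial_span_cmult
        monomial_span_mono[OF monomial_span_drop_lowest]) auto
  then have "F \<in> monomial_span 2 (2*l+2*m)"
    by (rule monomial_span_mono) (use assms in auto)
  moreover have "Jint (2*l) (2*m) h = (- S / 2) * h ^ (l+m) * Jint 0 0 h + ufun h * F (wfun h)" if h: "h > 0" for h
  proof -
    have "Jint 0 0 h = - 2 * ufun h"
      using Jint_even_even_closed_form[OF h, of 0 0] by (simp add: even_even_coeff_def)
    moreover have "h ^ (l+m) = wfun h ^ (l+m) * (1 + wfun h) ^ (l+m)"
      using wfun_mult_one_plus_wfun[of h] h by (metis less_imp_le power_mult_distrib)
    moreover have "(\<Sum>r\<le>m. c r * (wfun h ^ (l+m) * (1 + wfun h) ^ (m-r) - wfun h ^ (l+m)))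
        = (\<Sum>r\<le>m. c r * wfun h ^ (l+m) * (1 + wfun h) ^ (m-r)) - S * wfun h ^ (l+m)"
      unfolding S_def by (simp add: sum_subtractf sum_distrib_right algebra_simps)
    ultimately show ?thesis
      unfolding Jint_even_even_closed_form[OF h] F_def c_def by (simp add: algebra_simps)
  qed
  ultimately show thesis
    by (rule that)
qed

lemma Iint_Jint_even_odd_reduction:
  assumes "l + m \<ge> 1"
  obtains \<alpha> F where "F \<in> monomial_span 3 (2*l+2*m+1)"
    "\<And>h. h > 0 \<Longrightarrow> Iint (2*l) (2*m+1) h = \<alpha> * h ^ (l+m) * Iint 0 1 h + ufun h * F (wfun h)"
    "\<And>h. h > 0 \<Longrightarrow> Jint (2*l) (2*m+1) h = \<alpha> * h ^ (l+m) * Jint 0 1 h - ufun h * F (wfun h)"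
proof
  \<comment> \<open>The angular parts of \<open>I\<^sub>2\<^sub>l\<^sub>,\<^sub>2\<^sub>m\<^sub>+\<^sub>1\<close> and \<open>I\<^sub>0\<^sub>,\<^sub>1\<close> (and of the \<open>J\<close>'s) are proportional,
    with ratio \<open>\<alpha> = 2 wallis_comb l m\<close>.\<close>
  show "(\<lambda>x. 2 * sin_prim_comb_poly l m x) \<in> monomial_span 3 (2*l+2*m+1)"
    using monomial_span_cmult[OF sin_prim_comb_poly_in_span] by (rule monomial_span_mono) (use assms in auto)
next
  fix h :: real assume h: "h > 0"
  have base: "wallis_comb 0 0 = 1/2" "sin_prim_comb 0 0 x = 0" for x
    by (simp_all add: wallis_comb_def sin_prim_comb_def wallis_ratio.simps)
  have I01: "Iint 0 1 h = h * (thetaA h - cos (thetaA h) * sin (thetaA h))"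
    and J01: "Jint 0 1 h = h * (pi/2 - thetaA h + cos (thetaA h) * sin (thetaA h))"
    using Iint_even_odd_closed_form[OF h, of 0 0] Jint_even_odd_closed_form[OF h, of 0 0]
    by (simp_all add: base algebra_simps)
  show "Iint (2*l) (2*m+1) h = 2 * wallis_comb l m * h ^ (l+m) * Iint 0 1 h + ufun h * (2 * sin_prim_comb_poly l m (wfun h))"
    unfolding I01 Iint_even_odd_closed_form[OF h] using sin_prim_comb_at_A[OF h, of l m]
    by (simp add: algebra_simps)
  show "Jint (2*l) (2*m+1) h = 2 * wallis_comb l m * h ^ (l+m) * Jint 0 1 h - ufun h * (2 * sin_prim_comb_poly l m (wfun h))"
    unfolding J01 Jint_even_odd_closed_form[OF h] using sin_prim_comb_at_A[OF h, of l m]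
    by (simp add: algebra_simps)
qed

lemma Iint_odd_odd_reduction:
  assumes "l + m \<ge> 1"
  obtains \<beta> F where "F \<in> monomial_span 4 (2*l+2*m+2)"
    "\<And>h. h > 0 \<Longrightarrow> Iint (2*l+1) (2*m+1) h = \<beta> * h ^ (l+m) * Iint 1 1 h + F (wfun h)"
proof -
  define c where "c = odd_odd_coeff l m"
  define S where "S = (\<Sum>r\<le>l. c r)"
  \<comment> \<open>Since \<open>I\<^sub>1\<^sub>,\<^sub>1 = 2w\<^sup>3/3\<close>, the choice \<open>\<beta> = 3S/2\<close> cancels the highest power \<open>w\<^sup>2\<^sup>l\<^sup>+\<^sup>2\<^sup>m\<^sup>+\<^sup>3\<close>.\<close>
  define F where "F x = (\<Sum>r\<le>l. c r * (x ^ (2*m+l+r+3) * (1 + x) ^ (l-r) - x ^ (2*l+2*m+3)))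
    - S * (x ^ (l+m+3) * (1 + x) ^ (l+m) - x ^ (2*l+2*m+3))" for x :: real
  have "F \<in> monomial_span 4 (2*l+2*m+2)"
    unfolding F_def[abs_def] using assms
    by (intro monomial_span_diff monomial_span_sum monomial_span_cmult
        monomial_span_mono[OF monomial_span_drop_highest]) auto
  moreover have "Iint (2*l+1) (2*m+1) h = (3 * S / 2) * h ^ (l+m) * Iint 1 1 h + F (wfun h)" if h: "h > 0" for h
  proof -
    have I11: "Iint 1 1 h = 2/3 * wfun h ^ 3"
      using Iint_odd_odd_closed_form[OF h, of 0 0] by (simp add: odd_odd_coeff_def)
    have h_pow: "h ^ (l+m) = wfun h ^ (l+m) * (1 + wfun h) ^ (l+m)"
      using wfun_mult_one_plus_wfun[of h] h by (metis less_imp_le power_mult_distrib)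
    have w_pow: "wfun h ^ (l+m+3) = wfun h ^ (l+m) * wfun h ^ 3"
      by (simp flip: power_add)
    have "(\<Sum>r\<le>l. c r * (wfun h ^ (2*m+l+r+3) * (1 + wfun h) ^ (l-r) - wfun h ^ (2*l+2*m+3)))
        = (\<Sum>r\<le>l. c r * wfun h ^ (2*m+l+r+3) * (1 + wfun h) ^ (l-r)) - S * wfun h ^ (2*l+2*m+3)"
      unfolding S_def by (simp add: sum_subtractf sum_distrib_right algebra_simps)
    then show ?thesis
      unfolding Iint_odd_odd_closed_form[OF h] F_def I11 h_pow w_pow
      by (simp add: c_def algebra_simps)
  qed
  ultimately show thesis
    by (rule that)
qed

theorem lemma2p2:
  fixes l m :: nat
  assumes "l + m \<ge> 1"
  shows "\<exists>(al::real) (be::real) (ga::real) (de::real)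
            (phihat :: nat \<Rightarrow> real poly) (phit :: nat \<Rightarrow> real poly)
            (psit :: nat \<Rightarrow> real poly) (psic :: nat \<Rightarrow> real poly).
     (\<forall>k\<in>{2..2*l+2*m}. degree (phihat k) \<le> (2*l+2*m - k) div 2) \<and>
     (\<forall>k\<in>{3..2*l+2*m+1}. degree (phit k) \<le> (2*l+2*m+1 - k) div 2) \<and>
     (\<forall>k\<in>{3..2*l+2*m+1}. degree (psit k) \<le> (2*l+2*m+1 - k) div 2) \<and>
     (\<forall>k\<in>{4..2*l+2*m+2}. degree (psic k) \<le> (2*l+2*m+2 - k) div 2) \<and>
     (\<forall>h::real. h > 0 \<longrightarrow>
        Jint (2*l) (2*m) h = ga * h ^ ((2*l+2*m) div 2) * Jint 0 0 h
          + (\<Sum>k=2..2*l+2*m. poly (phihat k) h * wfun h powr (real k + 1/2)) \<and>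
        Iint (2*l) (2*m+1) h = al * h ^ ((2*l+2*m+1 - 1) div 2) * Iint 0 1 h
          + (\<Sum>k=3..2*l+2*m+1. poly (phit k) h * wfun h powr (real k + 1/2)) \<and>
        Jint (2*l) (2*m+1) h = de * h ^ ((2*l+2*m+1 - 1) div 2) * Jint 0 1 h
          + (\<Sum>k=3..2*l+2*m+1. poly (psit k) h * wfun h powr (real k + 1/2)) \<and>
        Iint (2*l+1) (2*m+1) h = be * h ^ ((2*l+2*m+2 - 2) div 2) * Iint 1 1 h
          + (\<Sum>k=4..2*l+2*m+2. poly (psic k) h * wfun h ^ k))"
proof -
  obtain ga F1 where F1: "F1 \<in> monomial_span 2 (2*l+2*m)"
    and J_ee: "\<And>h. h > 0 \<Longrightarrow> Jint (2*l) (2*m) h = ga * h ^ (l+m) * Jint 0 0 h + ufun h * F1 (wfun h)"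
    by (rule Jint_even_even_reduction[OF assms]) (rule that)
  obtain al F2 where F2: "F2 \<in> monomial_span 3 (2*l+2*m+1)"
    and I_eo: "\<And>h. h > 0 \<Longrightarrow> Iint (2*l) (2*m+1) h = al * h ^ (l+m) * Iint 0 1 h + ufun h * F2 (wfun h)"
    and J_eo: "\<And>h. h > 0 \<Longrightarrow> Jint (2*l) (2*m+1) h = al * h ^ (l+m) * Jint 0 1 h - ufun h * F2 (wfun h)"
    by (rule Iint_Jint_even_odd_reduction[OF assms]) (rule that)
  obtain be F3 where F3: "F3 \<in> monomial_span 4 (2*l+2*m+2)"
    and I_oo: "\<And>h. h > 0 \<Longrightarrow> Iint (2*l+1) (2*m+1) h = be * h ^ (l+m) * Iint 1 1 h + F3 (wfun h)"
    by (rule Iint_odd_odd_reduction[OF assms]) (rule that)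
  obtain c1 where c1:
    "\<And>h. h > 0 \<Longrightarrow> ufun h * F1 (wfun h) = (\<Sum>k=2..2*l+2*m. c1 k * wfun h powr (real k + 1/2))"
    by (rule monomial_span_sqrt_expansion[OF F1]) (rule that)
  obtain c2 where c2:
    "\<And>h. h > 0 \<Longrightarrow> ufun h * F2 (wfun h) = (\<Sum>k=3..2*l+2*m+1. c2 k * wfun h powr (real k + 1/2))"
    by (rule monomial_span_sqrt_expansion[OF F2]) (rule that)
  obtain c3 where c3: "\<And>x. F3 x = (\<Sum>k=4..2*l+2*m+2. c3 k * x ^ k)"
    using F3 unfolding monomial_span_def by blast
  show ?thesis
    by (rule exI[of _ al], rule exI[of _ be], rule exI[of _ ga], rule exI[of _ al],
        rule exI[of _ "\<lambda>k. [:c1 k:]"], rule exI[of _ "\<lambda>k. [:c2 k:]"],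
        rule exI[of _ "\<lambda>k. [:- c2 k:]"], rule exI[of _ "\<lambda>k. [:c3 k:]"])
      (use J_ee I_eo J_eo I_oo c1 c2 c3 in \<open>simp add: sum_negf\<close>)
qed

end
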